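(* Let $(\mathcal X,\mathcal B,\pi)$ be a measure space with $\pi$ $\sigma$-finite, $r:\mathcal X\to\mathbb R$ measurable, and $\{\varepsilon(x):x\in\mathcal X\}$ an arbitrary real-valued random field with i.i.d. copies $\varepsilon_1,\varepsilon_2,\dots$ independent of all sampled points. Assume: (a) $p_0\in\mathcal P_\pi$ (and a reference density $p_{\rm ref}\in\mathcal P_\pi$) satisfy $\int p|\log p|\,d\pi<\infty$; (b) for every $p\in\mathcal P_\pi$, $\mathbb E_{X\sim p}\bigl[e^{|r(X)+\varepsilon(X)|}\bigr]<\infty$ (with $X$ independent of $\varepsilon$); (c) $0<Q_*<\infty$ and $Q(x)\le Q_*$ for all $x$. Define recursively, for $t\in\mathbb N$, $p_{t+1}$ as a maximizer over $p\in\mathcal P_\pi$ of $$p\longmapsto \mathbb E_{X\sim p_t}\bigl[\log p(X)\,H^\infty_{p_t}(X)\bigr].$$ Then for every $t\in\mathbb N$ this functional has a unique maximizer over $p\in\mathcal P_\pi$, namely $p_{t+1}(x)=p_t(x)\,H^\infty_{p_t}(x)$, $x\in\mathcal X$.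
   Context: $\mathcal P_\pi$ is the set of probability measures on $(\mathcal X,\mathcal B)$ absolutely continuous w.r.t. $\pi$, identified with their densities. $Q(x):=e^{r(x)}\,\mathbb E[e^{\varepsilon(X)}\mid X=x]$ for $X$ independent of the noise field (i.e. $e^{r(x)}\mathbb E[e^{\varepsilon(x)}]$), and $Q_*:=\operatorname*{ess\,sup}_{x\in\mathcal X}Q(x)$ w.r.t. $\pi$. For an integer $K\ge2$ the choice kernel is $H^K_p(x):=\mathbb E\bigl[K e^{r(x)+\varepsilon(x)}/(e^{r(x)+\varepsilon(x)}+\sum_{k=1}^{K-1}e^{r(X_k)+\varepsilon_k(X_k)})\bigr]$ with $X_1,\dots,X_{K-1}$ i.i.d. with density $p$, independent of the i.i.d. noise copies $\varepsilon,\varepsilon_1,\dots$; and $H^\infty_p(x):=\lim_{K\to\infty}H^K_p(x)$. Under assumption (b) this limit exists and equals $Q(x)/\mathbb E_{X\sim p}Q(X)$. *)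

theory Defs
  imports "HOL-Probability.Probability"
begin

definition dens :: "'a measure \<Rightarrow> ('a \<Rightarrow> real) set" where
  "dens M = {p \<in> borel_measurable M. (\<forall>x\<in>space M. 0 \<le> p x) \<and> (\<integral>\<^sup>+x. ennreal (p x) \<partial>M) = 1}"

definition Qf :: "'w measure \<Rightarrow> ('a \<Rightarrow> real) \<Rightarrow> ('w \<Rightarrow> 'a \<Rightarrow> real) \<Rightarrow> 'a \<Rightarrow> ennreal" where
  "Qf N r eps x = ennreal (exp (r x)) * (\<integral>\<^sup>+w. ennreal (exp (eps w x)) \<partial>N)"

text \<open>Choice kernel H^K_p(x): noise copies indexed by {0..<K} (copy 0 is the one attached to x),
  sampled points X_1..X_{K-1} i.i.d. with density p, all independent (product measure).\<close>
definition HK :: "'a measure \<Rightarrow> 'w measure \<Rightarrow> ('a \<Rightarrow> real) \<Rightarrow> ('w \<Rightarrow> 'a \<Rightarrow> real)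
    \<Rightarrow> nat \<Rightarrow> ('a \<Rightarrow> real) \<Rightarrow> 'a \<Rightarrow> real" where
  "HK M N r eps K p x =
     (\<integral>z. (case z of (\<omega>, xs) \<Rightarrow>
            real K * exp (r x + eps (\<omega> 0) x) /
            (exp (r x + eps (\<omega> 0) x) + (\<Sum>k\<in>{1..<K}. exp (r (xs k) + eps (\<omega> k) (xs k)))))
       \<partial>(PiM {0..<K} (\<lambda>_. N) \<Otimes>\<^sub>M PiM {1..<K} (\<lambda>_. density M p)))"

definition Hinf :: "'a measure \<Rightarrow> 'w measure \<Rightarrow> ('a \<Rightarrow> real) \<Rightarrow> ('w \<Rightarrow> 'a \<Rightarrow> real)
    \<Rightarrow> ('a \<Rightarrow> real) \<Rightarrow> 'a \<Rightarrow> real" where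
  "Hinf M N r eps p x = lim (\<lambda>K. HK M N r eps K p x)"

text \<open>The objective  E_{X ~ p_t}[log p(X) H(X)] = integral of q(x) log p(x) d pi  with
  q = p_t * H, as an extended real: positive part minus negative part, with the conventions
  log 0 = -infinity and 0 * (-infinity) = 0.\<close>
definition obj :: "'a measure \<Rightarrow> ('a \<Rightarrow> real) \<Rightarrow> ('a \<Rightarrow> real) \<Rightarrow> ereal" where
  "obj M q p =
     enn2ereal (\<integral>\<^sup>+x. (if p x \<le> 0 then 0 else ennreal (q x * max 0 (ln (p x)))) \<partial>M)
   - enn2ereal (\<integral>\<^sup>+x. (if q x = 0 then 0 else if p x \<le> 0 then \<infinity>
                        else ennreal (q x * max 0 (- ln (p x)))) \<partial>M)"

definition unique_maximizer :: "'a measure \<Rightarrow> (('a \<Rightarrow> real) \<Rightarrow> ereal) \<Rightarrow> ('a \<Rightarrow> real) \<Rightarrow> bool" where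
  "unique_maximizer M F p \<longleftrightarrow>
     p \<in> dens M \<and> (\<forall>p'\<in>dens M. F p' \<le> F p) \<and>
     (\<forall>p'\<in>dens M. F p' = F p \<longrightarrow> (AE x in M. p' x = p x))"

primrec iter :: "'a measure \<Rightarrow> 'w measure \<Rightarrow> ('a \<Rightarrow> real) \<Rightarrow> ('w \<Rightarrow> 'a \<Rightarrow> real)
    \<Rightarrow> ('a \<Rightarrow> real) \<Rightarrow> nat \<Rightarrow> 'a \<Rightarrow> real" where
  "iter M N r eps p0 0 = p0"
| "iter M N r eps p0 (Suc t) = (\<lambda>x. iter M N r eps p0 t x * Hinf M N r eps (iter M N r eps p0 t) x)"

end

(*
  The maximiser is identified by Gibbs' inequality: for a density q of finite entropy and any
  density p, the integral of q log q - q log p equals that of q log (q / p) + p - q, which is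
  nonnegative and vanishes only if p = q almost everywhere.  It therefore suffices that each
  q = p_t H^inf_{p_t} is a density of finite entropy, and for this the kernel is computed explicitly:
  H^inf_p(x) = Q(x) / E_p Q.  The expected share K y / (y + S_K), where S_K is the sum of K - 1
  independent rival scores of mean m = E_p Q, is bounded below by Jensen's inequality for t |-> 1 / t
  and above by a Chernoff bound on the lower tail of S_K; both bounds tend to E y / m.  Since Q is
  bounded by Q_*, reweighting by Q / E_p Q preserves finite entropy, and induction on t concludes.
*)

theory Submission
  imports Defs
begin

lemma tendsto_of_nat_mult_div_affine:
  fixes m c q :: real
  assumes "0 < m"
  shows "(\<lambda>K::nat. real K * q / (c + (real K - 1) * m)) \<longlonglongrightarrow> q / m"
proof -
  have "(\<lambda>K::nat. q / (c * inverse (real K) + m - m * inverse (real K))) \<longlonglongrightarrow> q / (c * 0 + m - m * 0)"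
    by (intro tendsto_intros lim_inverse_n) (use assms in auto)
  moreover have "q / (c * inverse (real K) + m - m * inverse (real K)) = real K * q / (c + (real K - 1) * m)"
    if "1 \<le> K" for K :: nat
  proof -
    have "c * inverse (real K) + m - m * inverse (real K) = (c + (real K - 1) * m) / real K"
      using that by (simp add: field_simps)
    then show ?thesis
      by simp
  qed
  ultimately show ?thesis
    by (auto intro: Lim_transform_eventually eventually_sequentiallyI)
qed

lemma tendsto_of_nat_mult_exp_neg:
  fixes b :: real
  assumes "0 < b"
  shows "(\<lambda>K::nat. real K * exp (- (real K - 1) * b)) \<longlonglongrightarrow> 0"
proof -
  have "filterlim (\<lambda>K::nat. real K * b) at_top sequentially"
    using filterlim_tendsto_pos_mult_at_top[OF tendsto_const assms filterlim_real_sequentially]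
    by (simp add: mult.commute)
  from filterlim_compose[OF tendsto_power_div_exp_0[of 1] this]
  have "(\<lambda>K::nat. exp b / b * ((real K * b) ^ 1 / exp (real K * b))) \<longlonglongrightarrow> exp b / b * 0"
    by (intro tendsto_intros) simp
  moreover have "exp b / b * ((real K * b) ^ 1 / exp (real K * b)) = real K * exp (- (real K - 1) * b)"
    for K :: nat
    using assms by (simp add: field_simps exp_diff exp_minus left_diff_distrib)
  ultimately show ?thesis
    by simp
qed

lemma tendsto_of_nat_mult_one_minus_exp:
  fixes t :: real
  assumes "0 < t"
  shows "(\<lambda>n::nat. real n * (1 - exp (- (t / real n)))) \<longlonglongrightarrow> t"
proof -
  have "(\<lambda>n::nat. - (t * inverse (real n))) \<longlonglongrightarrow> - (t * 0)"
    by (intro tendsto_intros lim_inverse_n)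
  then have "filterlim (\<lambda>n::nat. - (t / real n)) (at 0) sequentially"
    using assms by (intro filterlim_atI) (auto simp: divide_inverse intro: eventually_sequentiallyI[of 1])
  from filterlim_compose[OF lim_exp_minus_1 this]
  have "(\<lambda>n::nat. t * ((exp (- (t / real n)) - 1) / - (t / real n))) \<longlonglongrightarrow> t * 1"
    by (intro tendsto_intros)
  moreover have "t * ((exp (- (t / real n)) - 1) / - (t / real n)) = real n * (1 - exp (- (t / real n)))"
    if "1 \<le> n" for n :: nat
    using that assms by (simp add: field_simps)
  ultimately show ?thesis
    by (auto intro: Lim_transform_eventually eventually_sequentiallyI)
qed

lemma divide_le_split_exp:
  fixes y s a l :: real
  assumes "0 < y" "0 \<le> s" "0 < a" "0 \<le> l"
  shows "y / (y + s) \<le> y / a + exp (l * (a - s))"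
proof (cases "a \<le> s")
  case True
  then have "y / (y + s) \<le> y / a"
    using assms by (intro divide_left_mono) auto
  moreover have "0 < exp (l * (a - s))"
    by simp
  ultimately show ?thesis
    by linarith
next
  case False
  then have "y / (y + s) \<le> 1" "1 \<le> exp (l * (a - s))"
    using assms by auto
  moreover have "0 \<le> y / a"
    using assms by simp
  ultimately show ?thesis
    by linarith
qed

lemma ennreal_add_sum_mult:
  assumes "0 \<le> a" "0 \<le> b" "0 \<le> c" "\<And>k. k \<in> I \<Longrightarrow> 0 \<le> f k"
  shows "ennreal (a + b + (\<Sum>k\<in>I. c * f k)) = ennreal a + ennreal b + (\<Sum>k\<in>I. ennreal c * ennreal (f k))"
  using assms by (simp add: sum_nonneg ennreal_mult sum_ennreal[symmetric])

lemma divide_tangent_le: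
  fixes t c :: real
  assumes "0 < t" "0 < c"
  shows "2 / c \<le> 1 / t + t / c\<^sup>2"
proof -
  have "1 / t + t / c\<^sup>2 - 2 / c = (t - c)\<^sup>2 / (t * c\<^sup>2)"
    using assms by (simp add: field_simps power2_eq_square)
  also have "\<dots> \<ge> 0"
    using assms by simp
  finally show ?thesis
    by simp
qed

lemma abs_of_nat_mult_divide_affine_le:
  fixes y m :: real
  assumes "0 < y" "0 < m"
  shows "\<bar>real K * y / (y + (real K - 1) * m)\<bar> \<le> 1 + 2 * y / m"
proof (cases "K \<le> 1")
  case True
  then have "K = 0 \<or> K = 1"
    by auto
  then show ?thesis
    using assms by auto
next
  case False
  then have K: "2 \<le> real K"
    by simp
  have pos: "0 < (real K - 1) * m"
    using K assms by simp
  have "\<bar>real K * y / (y + (real K - 1) * m)\<bar> = real K * y / (y + (real K - 1) * m)"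
    using assms pos by simp
  also have "\<dots> \<le> real K * y / ((real K - 1) * m)"
    using assms pos by (intro divide_left_mono) auto
  also have "\<dots> \<le> (real K - 1) * (2 * y) / ((real K - 1) * m)"
    using mult_right_mono[OF K, of y] assms pos by (intro divide_right_mono) (auto simp: algebra_simps)
  also have "\<dots> = 2 * y / m"
    using K by simp
  finally show ?thesis
    by simp
qed

lemma abs_of_nat_mult_one_minus_exp_le:
  fixes t :: real
  assumes "0 \<le> t"
  shows "\<bar>real n * (1 - exp (- (t / real n)))\<bar> \<le> t"
proof (cases "n = 0")
  case False
  have "1 - t / real n \<le> exp (- (t / real n))"
    using exp_ge_add_one_self[of "- (t / real n)"] by simp
  then have "real n * (1 - exp (- (t / real n))) \<le> real n * (t / real n)"
    by (intro mult_left_mono) auto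
  moreover have "0 \<le> 1 - exp (- (t / real n))"
    using assms by simp
  ultimately show ?thesis
    using False by simp
qed (use assms in simp)

section \<open>Independent samples\<close>

lemma measurable_pair_components:
  "i \<in> I \<Longrightarrow> j \<in> J \<Longrightarrow> (\<lambda>z. (fst z i, snd z j)) \<in> PiM I M \<Otimes>\<^sub>M PiM J M' \<rightarrow>\<^sub>M M i \<Otimes>\<^sub>M M' j"
  by (intro measurable_Pair measurable_compose[OF measurable_fst measurable_component_singleton]
      measurable_compose[OF measurable_snd measurable_component_singleton])

lemma (in product_sigma_finite) nn_integral_cmult_prod:
  assumes "finite I" "\<And>i. i \<in> I \<Longrightarrow> f i \<in> borel_measurable (M i)"
  shows "(\<integral>\<^sup>+x. c * (\<Prod>i\<in>I. f i (x i)) \<partial>PiM I M) = c * (\<Prod>i\<in>I. integral\<^sup>N (M i) (f i))"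
proof -
  have "(\<lambda>x. \<Prod>i\<in>I. f i (x i)) \<in> borel_measurable (PiM I M)"
    using assms(2) by (intro borel_measurable_prod_ennreal measurable_compose[OF measurable_component_singleton])
  then show ?thesis
    using assms by (simp add: nn_integral_cmult product_nn_integral_prod)
qed

lemma nn_integral_independent_samples:
  fixes h :: "'w \<Rightarrow> ennreal" and g :: "nat \<Rightarrow> 'w \<Rightarrow> 'a \<Rightarrow> ennreal"
  assumes N: "sigma_finite_measure N" and D: "sigma_finite_measure D"
    and I: "finite I" "0 \<notin> I"
    and h: "h \<in> borel_measurable N"
    and g: "\<And>k. k \<in> I \<Longrightarrow> (\<lambda>(w, x). g k w x) \<in> borel_measurable (N \<Otimes>\<^sub>M D)"
  shows "(\<integral>\<^sup>+z. h (fst z 0) * (\<Prod>k\<in>I. g k (fst z k) (snd z k))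
            \<partial>(PiM (insert 0 I) (\<lambda>_. N) \<Otimes>\<^sub>M PiM I (\<lambda>_. D)))
       = (\<integral>\<^sup>+w. h w \<partial>N) * (\<Prod>k\<in>I. \<integral>\<^sup>+z. g k (fst z) (snd z) \<partial>(N \<Otimes>\<^sub>M D))"
proof -
  interpret D: sigma_finite_measure D by (rule D)
  interpret PN: product_sigma_finite "\<lambda>_. N" by (simp add: product_sigma_finite_def N)
  interpret PD: product_sigma_finite "\<lambda>_. D" by (simp add: product_sigma_finite_def D)
  interpret PiD: sigma_finite_measure "PiM I (\<lambda>_. D)" by (rule PD.sigma_finite[OF I(1)])
  have I_nonzero: "k \<noteq> 0" if "k \<in> I" for k
    using I(2) that by metis
  define G where "G k w = (\<integral>\<^sup>+x. g k w x \<partial>D)" for k w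
  have g_section: "g k w \<in> borel_measurable D" if "k \<in> I" "w \<in> space N" for k w
    using measurable_compose_Pair1[OF that(2) g[OF that(1)]] by simp
  have G: "G k \<in> borel_measurable N" if "k \<in> I" for k
    unfolding G_def using g[OF that] by (rule D.borel_measurable_nn_integral)
  have "(\<lambda>z. g k (fst z k) (snd z k)) \<in> borel_measurable (PiM (insert 0 I) (\<lambda>_. N) \<Otimes>\<^sub>M PiM I (\<lambda>_. D))"
    if "k \<in> I" for k
    using measurable_compose[OF measurable_pair_components[of k "insert 0 I" k I "\<lambda>_. N" "\<lambda>_. D"] g[OF that]] that by simp
  moreover have "(\<lambda>z. h (fst z 0)) \<in> borel_measurable (PiM (insert 0 I) (\<lambda>_. N) \<Otimes>\<^sub>M PiM I (\<lambda>_. D))"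
    by (intro measurable_compose[OF _ h] measurable_compose[OF measurable_fst measurable_component_singleton]) simp
  ultimately have "(\<integral>\<^sup>+z. h (fst z 0) * (\<Prod>k\<in>I. g k (fst z k) (snd z k))
          \<partial>(PiM (insert 0 I) (\<lambda>_. N) \<Otimes>\<^sub>M PiM I (\<lambda>_. D)))
      = (\<integral>\<^sup>+\<omega>. \<integral>\<^sup>+xs. h (\<omega> 0) * (\<Prod>k\<in>I. g k (\<omega> k) (xs k)) \<partial>PiM I (\<lambda>_. D) \<partial>PiM (insert 0 I) (\<lambda>_. N))"
    by (subst PiD.nn_integral_fst[symmetric]) (auto intro!: borel_measurable_times_ennreal borel_measurable_prod_ennreal)
  also have "\<dots> = (\<integral>\<^sup>+\<omega>. (\<Prod>k\<in>insert 0 I. (if k = 0 then h else G k) (\<omega> k)) \<partial>PiM (insert 0 I) (\<lambda>_. N))"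
  proof (rule nn_integral_cong)
    fix \<omega> assume "\<omega> \<in> space (PiM (insert 0 I) (\<lambda>_. N))"
    then have "\<omega> k \<in> space N" if "k \<in> I" for k
      using that by (simp add: space_PiM PiE_iff)
    then have "(\<integral>\<^sup>+xs. h (\<omega> 0) * (\<Prod>k\<in>I. g k (\<omega> k) (xs k)) \<partial>PiM I (\<lambda>_. D)) = h (\<omega> 0) * (\<Prod>k\<in>I. G k (\<omega> k))"
      unfolding G_def using I(1) g_section by (intro PD.nn_integral_cmult_prod) auto
    then show "(\<integral>\<^sup>+xs. h (\<omega> 0) * (\<Prod>k\<in>I. g k (\<omega> k) (xs k)) \<partial>PiM I (\<lambda>_. D))
        = (\<Prod>k\<in>insert 0 I. (if k = 0 then h else G k) (\<omega> k))"
      using I by (simp add: I_nonzero cong: prod.cong)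
  qed
  also have "\<dots> = (\<Prod>k\<in>insert 0 I. integral\<^sup>N N (if k = 0 then h else G k))"
    using I h G by (intro PN.product_nn_integral_prod) auto
  also have "\<dots> = (\<integral>\<^sup>+w. h w \<partial>N) * (\<Prod>k\<in>I. \<integral>\<^sup>+w. G k w \<partial>N)"
    using I by (simp add: I_nonzero cong: prod.cong)
  also have "(\<Prod>k\<in>I. \<integral>\<^sup>+w. G k w \<partial>N) = (\<Prod>k\<in>I. \<integral>\<^sup>+z. g k (fst z) (snd z) \<partial>(N \<Otimes>\<^sub>M D))"
    unfolding G_def using g by (intro prod.cong refl) (simp add: D.nn_integral_fst[symmetric] split_beta')
  finally show ?thesis .
qed

section \<open>The many-rivals limit of the expected choice share\<close>

locale choice_share =
  fixes N :: "'w measure" and D :: "'a measure"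
    and Y :: "'w \<Rightarrow> 'a \<Rightarrow> real" and y0 :: "'w \<Rightarrow> real"
  assumes prob_N: "prob_space N" and prob_D: "prob_space D"
    and Y_meas[measurable]: "(\<lambda>(w, x). Y w x) \<in> borel_measurable (N \<Otimes>\<^sub>M D)"
    and Y_pos: "\<And>w x. w \<in> space N \<Longrightarrow> x \<in> space D \<Longrightarrow> 0 < Y w x"
    and y0_meas[measurable]: "y0 \<in> borel_measurable N"
    and y0_pos: "\<And>w. w \<in> space N \<Longrightarrow> 0 < y0 w"
    and Y_int: "integrable (N \<Otimes>\<^sub>M D) (\<lambda>z. Y (fst z) (snd z))"
    and y0_int: "integrable N y0"
begin

text \<open>\<open>samples K\<close> and \<open>share K\<close> are the sample space and the integrand of \<^const>\<open>HK\<close>: coordinate \<open>0\<close>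
  of the first factor is the noise of the own alternative, with score \<open>y0\<close>; coordinate \<open>k \<ge> 1\<close>
  of both factors is the noise and the location of the \<open>k\<close>-th rival, with score \<open>Y\<close>.\<close>

definition "samples (K::nat) = PiM {0..<K} (\<lambda>_. N) \<Otimes>\<^sub>M PiM {1..<K} (\<lambda>_. D)"
definition "rivals_score (K::nat) z = (\<Sum>k\<in>{1..<K}. Y (fst z k) (snd z k))"
definition "share (K::nat) z = real K * y0 (fst z 0) / (y0 (fst z 0) + rivals_score K z)"
definition "rival_mean = (\<integral>z. Y (fst z) (snd z) \<partial>(N \<Otimes>\<^sub>M D))"
definition "own_mean = (\<integral>w. y0 w \<partial>N)"
definition "laplace l = (\<integral>z. exp (- l * Y (fst z) (snd z)) \<partial>(N \<Otimes>\<^sub>M D))"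

lemma prob_pair: "prob_space (N \<Otimes>\<^sub>M D)"
  using prob_N prob_D by (rule prob_space_pair)

lemma prob_samples: "prob_space (samples K)"
  unfolding samples_def using prob_N prob_D by (intro prob_space_pair prob_space_PiM)

lemma space_samples:
  assumes "z \<in> space (samples K)"
  shows "k < K \<Longrightarrow> fst z k \<in> space N" and "k \<in> {1..<K} \<Longrightarrow> snd z k \<in> space D"
  using assms by (auto simp: samples_def space_pair_measure space_PiM PiE_iff)

lemma own_measurable:
  assumes "1 \<le> K" "h \<in> borel_measurable N"
  shows "(\<lambda>z. h (fst z 0)) \<in> borel_measurable (samples K)"
  unfolding samples_def using assms
  by (intro measurable_compose[OF measurable_compose[OF measurable_fst measurable_component_singleton]]) auto

lemma rival_measurable:
  assumes "k \<in> {1..<K}" "(\<lambda>(w, x). g w x) \<in> borel_measurable (N \<Otimes>\<^sub>M D)"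
  shows "(\<lambda>z. g (fst z k) (snd z k)) \<in> borel_measurable (samples K)"
  using measurable_compose[OF measurable_pair_components[of k "{0..<K}" k "{1..<K}" "\<lambda>_. N" "\<lambda>_. D"] assms(2)] assms(1)
  by (simp add: samples_def)

lemma rivals_score_nonneg: "z \<in> space (samples K) \<Longrightarrow> 0 \<le> rivals_score K z"
  unfolding rivals_score_def by (intro sum_nonneg less_imp_le[OF Y_pos] space_samples) auto

lemma share_measurable: "1 \<le> K \<Longrightarrow> share K \<in> borel_measurable (samples K)"
  unfolding share_def rivals_score_def
  using own_measurable[OF _ y0_meas] rival_measurable[OF _ Y_meas]
  by (intro borel_measurable_divide borel_measurable_times borel_measurable_add borel_measurable_sum) auto

lemma share_nonneg: "1 \<le> K \<Longrightarrow> z \<in> space (samples K) \<Longrightarrow> 0 \<le> share K z"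
  unfolding share_def using rivals_score_nonneg y0_pos space_samples(1) by (simp add: add_nonneg_nonneg less_imp_le)

lemma share_le: "1 \<le> K \<Longrightarrow> z \<in> space (samples K) \<Longrightarrow> share K z \<le> real K"
  unfolding share_def using rivals_score_nonneg[of z K] y0_pos[OF space_samples(1)[of z K 0]]
  by (simp add: mult_le_cancel_left1 divide_le_eq)

lemma integral_share_eq:
  assumes "1 \<le> K"
  shows "(\<integral>z. share K z \<partial>samples K) = enn2real (\<integral>\<^sup>+z. ennreal (share K z) \<partial>samples K)"
    and "(\<integral>\<^sup>+z. ennreal (share K z) \<partial>samples K) < \<infinity>"
proof -
  show "(\<integral>z. share K z \<partial>samples K) = enn2real (\<integral>\<^sup>+z. ennreal (share K z) \<partial>samples K)"
    using assms share_measurable share_nonneg by (intro integral_eq_nn_integral) auto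
  have "(\<integral>\<^sup>+z. ennreal (share K z) \<partial>samples K) \<le> (\<integral>\<^sup>+z. ennreal (real K) \<partial>samples K)"
    using assms share_le by (intro nn_integral_mono ennreal_leI) auto
  also have "\<dots> = ennreal (real K)"
    using prob_space.emeasure_space_1[OF prob_samples] by simp
  also have "\<dots> < \<infinity>"
    by simp
  finally show "(\<integral>\<^sup>+z. ennreal (share K z) \<partial>samples K) < \<infinity>" .
qed

lemma nn_integral_samples:
  assumes "1 \<le> K" "h \<in> borel_measurable N"
    and "\<And>k. k \<in> {1..<K} \<Longrightarrow> (\<lambda>(w, x). g k w x) \<in> borel_measurable (N \<Otimes>\<^sub>M D)"
  shows "(\<integral>\<^sup>+z. h (fst z 0) * (\<Prod>k\<in>{1..<K}. g k (fst z k) (snd z k)) \<partial>samples K)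
       = (\<integral>\<^sup>+w. h w \<partial>N) * (\<Prod>k\<in>{1..<K}. \<integral>\<^sup>+z. g k (fst z) (snd z) \<partial>(N \<Otimes>\<^sub>M D))"
proof -
  have "{0..<K} = insert 0 {1..<K}"
    using assms(1) by auto
  then show ?thesis
    unfolding samples_def using assms prob_N prob_D
    by (simp only:) (rule nn_integral_independent_samples; auto intro: prob_space_imp_sigma_finite)
qed

lemma nn_integral_own:
  "1 \<le> K \<Longrightarrow> h \<in> borel_measurable N \<Longrightarrow> (\<integral>\<^sup>+z. h (fst z 0) \<partial>samples K) = (\<integral>\<^sup>+w. h w \<partial>N)"
  using nn_integral_samples[of K h "\<lambda>_ _ _. 1"] prob_space.emeasure_space_1[OF prob_pair] by simp

lemma nn_integral_own_rival:
  assumes "j \<in> {1..<K}" "h \<in> borel_measurable N" "(\<lambda>(w, x). g w x) \<in> borel_measurable (N \<Otimes>\<^sub>M D)"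
  shows "(\<integral>\<^sup>+z. h (fst z 0) * g (fst z j) (snd z j) \<partial>samples K)
       = (\<integral>\<^sup>+w. h w \<partial>N) * (\<integral>\<^sup>+z. g (fst z) (snd z) \<partial>(N \<Otimes>\<^sub>M D))"
proof -
  have "(\<integral>\<^sup>+z. (if k = j then g (fst z) (snd z) else 1) \<partial>(N \<Otimes>\<^sub>M D))
      = (if k = j then \<integral>\<^sup>+z. g (fst z) (snd z) \<partial>(N \<Otimes>\<^sub>M D) else 1)" for k
    using prob_space.emeasure_space_1[OF prob_pair] by simp
  then show ?thesis
    using assms nn_integral_samples[of K h "\<lambda>k w x. if k = j then g w x else 1"]
    by (simp cong: prod.cong)
qed

lemma nn_integral_prod_rivals:
  assumes "1 \<le> K" "(\<lambda>(w, x). g w x) \<in> borel_measurable (N \<Otimes>\<^sub>M D)"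
  shows "(\<integral>\<^sup>+z. (\<Prod>k\<in>{1..<K}. g (fst z k) (snd z k)) \<partial>samples K)
       = (\<integral>\<^sup>+z. g (fst z) (snd z) \<partial>(N \<Otimes>\<^sub>M D)) ^ (K - 1)"
  using assms nn_integral_samples[of K "\<lambda>_. 1" "\<lambda>_. g"] prob_space.emeasure_space_1[OF prob_N] by simp

lemma nn_integral_rival: "(\<integral>\<^sup>+z. ennreal (Y (fst z) (snd z)) \<partial>(N \<Otimes>\<^sub>M D)) = ennreal rival_mean"
  unfolding rival_mean_def using Y_int Y_pos
  by (intro nn_integral_eq_integral AE_I2) (auto simp: space_pair_measure less_imp_le)

lemma nn_integral_own_score: "(\<integral>\<^sup>+w. ennreal (y0 w) \<partial>N) = ennreal own_mean"
  unfolding own_mean_def using y0_int y0_pos by (intro nn_integral_eq_integral AE_I2) (auto simp: less_imp_le)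

lemma own_mean_nonneg: "0 \<le> own_mean"
  unfolding own_mean_def using y0_pos by (simp add: integral_nonneg less_imp_le)

lemma rival_mean_pos: "0 < rival_mean"
proof -
  have pos: "AE z in N \<Otimes>\<^sub>M D. 0 < Y (fst z) (snd z)"
    by (intro AE_I2) (auto simp: space_pair_measure Y_pos)
  then have nonneg: "AE z in N \<Otimes>\<^sub>M D. 0 \<le> Y (fst z) (snd z)"
    by eventually_elim simp
  have "rival_mean \<noteq> 0"
  proof
    assume "rival_mean = 0"
    then have "AE z in N \<Otimes>\<^sub>M D. Y (fst z) (snd z) = 0"
      unfolding rival_mean_def using integral_nonneg_eq_0_iff_AE[OF Y_int nonneg] by simp
    with pos have "AE z in N \<Otimes>\<^sub>M D. False"
      by eventually_elim simp
    then show False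
      using prob_space.AE_False[OF prob_pair] by simp
  qed
  moreover have "0 \<le> rival_mean"
    unfolding rival_mean_def using nonneg by (rule integral_nonneg_AE)
  ultimately show ?thesis
    by simp
qed

text \<open>Tangent line of the convex map \<open>s \<mapsto> 1 / (y + s)\<close> at \<open>s = a\<close>; with \<open>a = E S\<close> this is Jensen's
  inequality, and the correction term integrates to zero because the rivals are independent of the
  own noise.\<close>

lemma share_tangent_bound:
  assumes K: "1 \<le> K" and z: "z \<in> space (samples K)" and a: "0 \<le> a"
  defines "y \<equiv> y0 (fst z 0)"
  shows "ennreal (real K * y / (y + a)) + ennreal (real K * y / (y + a))
    \<le> ennreal (share K z) + ennreal (real K * y * y / (y + a)\<^sup>2)
      + (\<Sum>k\<in>{1..<K}. ennreal (real K * y / (y + a)\<^sup>2) * ennreal (Y (fst z k) (snd z k)))"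
proof -
  have y: "0 < y"
    using K y0_pos space_samples(1)[OF z] by (simp add: y_def)
  have S: "0 \<le> rivals_score K z"
    by (rule rivals_score_nonneg[OF z])
  have Y_nonneg: "0 \<le> Y (fst z k) (snd z k)" if "k \<in> {1..<K}" for k
    using Y_pos[OF space_samples[OF z]] that by (simp add: less_imp_le)
  have double: "ennreal (real K * y / (y + a)) + ennreal (real K * y / (y + a)) = ennreal (2 * (real K * y / (y + a)))"
    using y a by (subst ennreal_plus[symmetric]) auto
  have "2 / (y + a) \<le> 1 / (y + rivals_score K z) + (y + rivals_score K z) / (y + a)\<^sup>2"
    using y S a by (intro divide_tangent_le) auto
  from mult_left_mono[OF this, of "real K * y"]
  have "2 * (real K * y / (y + a))
      \<le> share K z + real K * y * y / (y + a)\<^sup>2 + real K * y / (y + a)\<^sup>2 * rivals_score K z"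
    using y unfolding share_def y_def by (simp add: algebra_simps add_divide_distrib)
  also have "\<dots> = share K z + real K * y * y / (y + a)\<^sup>2
      + (\<Sum>k\<in>{1..<K}. real K * y / (y + a)\<^sup>2 * Y (fst z k) (snd z k))"
    by (simp add: rivals_score_def sum_distrib_left)
  finally have "ennreal (2 * (real K * y / (y + a))) \<le> ennreal (share K z + real K * y * y / (y + a)\<^sup>2
      + (\<Sum>k\<in>{1..<K}. real K * y / (y + a)\<^sup>2 * Y (fst z k) (snd z k)))"
    by (rule ennreal_leI)
  also have "\<dots> = ennreal (share K z) + ennreal (real K * y * y / (y + a)\<^sup>2)
      + (\<Sum>k\<in>{1..<K}. ennreal (real K * y / (y + a)\<^sup>2) * ennreal (Y (fst z k) (snd z k)))"
    using y share_nonneg[OF K z] Y_nonneg by (intro ennreal_add_sum_mult) auto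
  finally show ?thesis
    using double by simp
qed

lemma nn_integral_own_plus_rivals:
  assumes K: "1 \<le> K" and [measurable]: "u \<in> borel_measurable N" "v \<in> borel_measurable N"
  shows "(\<integral>\<^sup>+z. u (fst z 0) + (\<Sum>k\<in>{1..<K}. v (fst z 0) * ennreal (Y (fst z k) (snd z k))) \<partial>samples K)
    = (\<integral>\<^sup>+w. u w \<partial>N) + of_nat (K - 1) * (\<integral>\<^sup>+w. v w \<partial>N) * ennreal rival_mean"
proof -
  have rival: "(\<lambda>z. v (fst z 0) * ennreal (Y (fst z k) (snd z k))) \<in> borel_measurable (samples K)"
    "(\<integral>\<^sup>+z. v (fst z 0) * ennreal (Y (fst z k) (snd z k)) \<partial>samples K) = (\<integral>\<^sup>+w. v w \<partial>N) * ennreal rival_mean"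
    if "k \<in> {1..<K}" for k
    using own_measurable[OF K, of v] rival_measurable[OF that, of "\<lambda>w x. ennreal (Y w x)"]
      nn_integral_own_rival[OF that, of v "\<lambda>w x. ennreal (Y w x)"]
    by (auto simp: nn_integral_rival)
  have "(\<integral>\<^sup>+z. (\<Sum>k\<in>{1..<K}. v (fst z 0) * ennreal (Y (fst z k) (snd z k))) \<partial>samples K)
      = (\<Sum>k\<in>{1..<K}. \<integral>\<^sup>+z. v (fst z 0) * ennreal (Y (fst z k) (snd z k)) \<partial>samples K)"
    using rival(1) by (rule nn_integral_sum)
  also have "\<dots> = of_nat (K - 1) * (\<integral>\<^sup>+w. v w \<partial>N) * ennreal rival_mean"
    using rival(2) by (simp add: mult.assoc)
  finally show ?thesis
    using K own_measurable[OF K, of u] rival(1)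
    by (simp add: nn_integral_add borel_measurable_sum nn_integral_own)
qed

lemma nn_integral_own_split:
  assumes c: "0 \<le> c" and a: "0 \<le> a"
  shows "(\<integral>\<^sup>+w. ennreal (c * y0 w * y0 w / (y0 w + a)\<^sup>2) \<partial>N)
      + ennreal a * (\<integral>\<^sup>+w. ennreal (c * y0 w / (y0 w + a)\<^sup>2) \<partial>N)
    = (\<integral>\<^sup>+w. ennreal (c * y0 w / (y0 w + a)) \<partial>N)"
proof -
  have "(\<lambda>w. ennreal (c * y0 w * y0 w / (y0 w + a)\<^sup>2)) \<in> borel_measurable N"
    "(\<lambda>w. ennreal (c * y0 w / (y0 w + a)\<^sup>2)) \<in> borel_measurable N"
    by measurable
  then have "(\<integral>\<^sup>+w. ennreal (c * y0 w * y0 w / (y0 w + a)\<^sup>2) \<partial>N)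
      + ennreal a * (\<integral>\<^sup>+w. ennreal (c * y0 w / (y0 w + a)\<^sup>2) \<partial>N)
    = (\<integral>\<^sup>+w. ennreal (c * y0 w * y0 w / (y0 w + a)\<^sup>2) + ennreal a * ennreal (c * y0 w / (y0 w + a)\<^sup>2) \<partial>N)"
    by (simp add: nn_integral_add nn_integral_cmult)
  also have "\<dots> = (\<integral>\<^sup>+w. ennreal (c * y0 w / (y0 w + a)) \<partial>N)"
  proof (rule nn_integral_cong)
    fix w assume "w \<in> space N"
    then have y: "0 < y0 w"
      by (rule y0_pos)
    have "ennreal (c * y0 w * y0 w / (y0 w + a)\<^sup>2) + ennreal a * ennreal (c * y0 w / (y0 w + a)\<^sup>2)
        = ennreal (c * y0 w * y0 w / (y0 w + a)\<^sup>2 + a * (c * y0 w / (y0 w + a)\<^sup>2))"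
      using y a c by (simp add: ennreal_mult[symmetric])
    also have "c * y0 w * y0 w / (y0 w + a)\<^sup>2 + a * (c * y0 w / (y0 w + a)\<^sup>2) = c * y0 w * (y0 w + a) / (y0 w + a)\<^sup>2"
      by (simp add: add_divide_distrib algebra_simps)
    also have "\<dots> = c * y0 w / (y0 w + a)"
      using y a by (simp add: power2_eq_square)
    finally show "ennreal (c * y0 w * y0 w / (y0 w + a)\<^sup>2) + ennreal a * ennreal (c * y0 w / (y0 w + a)\<^sup>2)
        = ennreal (c * y0 w / (y0 w + a))" .
  qed
  finally show ?thesis .
qed

lemma nn_integral_share_lower:
  assumes K: "1 \<le> K"
  defines "a \<equiv> (real K - 1) * rival_mean"
  shows "(\<integral>\<^sup>+w. ennreal (real K * y0 w / (y0 w + a)) \<partial>N) \<le> (\<integral>\<^sup>+z. ennreal (share K z) \<partial>samples K)"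
proof -
  have a: "0 \<le> a"
    using K rival_mean_pos by (simp add: a_def)
  define H where "H = (\<integral>\<^sup>+w. ennreal (real K * y0 w / (y0 w + a)) \<partial>N)"
  define u where "u w = ennreal (real K * y0 w * y0 w / (y0 w + a)\<^sup>2)" for w
  define v where "v w = ennreal (real K * y0 w / (y0 w + a)\<^sup>2)" for w
  have u_meas: "u \<in> borel_measurable N" and v_meas: "v \<in> borel_measurable N"
    unfolding u_def[abs_def] v_def[abs_def] by measurable
  have "real K * y0 w / (y0 w + a) \<le> real K" if "w \<in> space N" for w
    using y0_pos[OF that] a by (simp add: divide_le_eq mult_left_mono add_pos_nonneg)
  then have "H \<le> (\<integral>\<^sup>+w. ennreal (real K) \<partial>N)"
    unfolding H_def by (intro nn_integral_mono ennreal_leI)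
  then have H_finite: "H < \<infinity>"
    using prob_space.emeasure_space_1[OF prob_N] by (simp add: le_less_trans)
  have "ennreal a = of_nat (K - 1) * ennreal rival_mean"
    using K rival_mean_pos by (simp add: a_def ennreal_mult ennreal_of_nat_eq_real_of_nat of_nat_diff)
  then have rivals: "(\<integral>\<^sup>+w. u w \<partial>N) + of_nat (K - 1) * (\<integral>\<^sup>+w. v w \<partial>N) * ennreal rival_mean = H"
    using nn_integral_own_split[OF _ a, of "real K"] unfolding H_def u_def v_def by (simp add: ac_simps)
  have h_meas: "(\<lambda>w. ennreal (real K * y0 w / (y0 w + a))) \<in> borel_measurable N"
    by measurable
  have "(\<integral>\<^sup>+z. ennreal (real K * y0 (fst z 0) / (y0 (fst z 0) + a)) \<partial>samples K) = H"
    unfolding H_def using K h_meas by (rule nn_integral_own)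
  then have "H + H = (\<integral>\<^sup>+z. ennreal (real K * y0 (fst z 0) / (y0 (fst z 0) + a))
      + ennreal (real K * y0 (fst z 0) / (y0 (fst z 0) + a)) \<partial>samples K)"
    using own_measurable[OF K h_meas] by (simp add: nn_integral_add)
  also have "\<dots> \<le> (\<integral>\<^sup>+z. ennreal (share K z) + (u (fst z 0)
      + (\<Sum>k\<in>{1..<K}. v (fst z 0) * ennreal (Y (fst z k) (snd z k)))) \<partial>samples K)"
    unfolding u_def v_def using share_tangent_bound[OF K _ a] by (intro nn_integral_mono) (simp add: add.assoc)
  also have "\<dots> = (\<integral>\<^sup>+z. ennreal (share K z) \<partial>samples K)
      + (\<integral>\<^sup>+z. u (fst z 0) + (\<Sum>k\<in>{1..<K}. v (fst z 0) * ennreal (Y (fst z k) (snd z k))) \<partial>samples K)"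
    using share_measurable[OF K] own_measurable[OF K u_meas] own_measurable[OF K v_meas]
      rival_measurable[of _ K "\<lambda>w x. ennreal (Y w x)"]
    by (intro nn_integral_add borel_measurable_add borel_measurable_sum borel_measurable_times_ennreal) auto
  also have "\<dots> = (\<integral>\<^sup>+z. ennreal (share K z) \<partial>samples K) + H"
    using nn_integral_own_plus_rivals[OF K u_meas v_meas] rivals by simp
  finally show ?thesis
    using H_finite by (auto simp: H_def add.commute ennreal_add_left_cancel_le)
qed

lemma integral_share_lower:
  assumes K: "1 \<le> K"
  shows "(\<integral>w. real K * y0 w / (y0 w + (real K - 1) * rival_mean) \<partial>N) \<le> (\<integral>z. share K z \<partial>samples K)"
proof -
  have "(\<integral>w. real K * y0 w / (y0 w + (real K - 1) * rival_mean) \<partial>N)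
      = enn2real (\<integral>\<^sup>+w. ennreal (real K * y0 w / (y0 w + (real K - 1) * rival_mean)) \<partial>N)"
    using K y0_pos rival_mean_pos
    by (intro integral_eq_nn_integral AE_I2) (auto intro!: divide_nonneg_nonneg add_nonneg_nonneg simp: less_imp_le)
  also have "\<dots> \<le> (\<integral>z. share K z \<partial>samples K)"
    using nn_integral_share_lower[OF K] integral_share_eq[OF K] by (simp add: enn2real_mono)
  finally show ?thesis .
qed

lemma tendsto_integral_share_lower:
  "(\<lambda>K. \<integral>w. real K * y0 w / (y0 w + (real K - 1) * rival_mean) \<partial>N) \<longlonglongrightarrow> own_mean / rival_mean"
proof -
  interpret N: prob_space N
    by (rule prob_N)
  have "(\<lambda>K. \<integral>w. real K * y0 w / (y0 w + (real K - 1) * rival_mean) \<partial>N) \<longlonglongrightarrow> (\<integral>w. y0 w / rival_mean \<partial>N)"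
  proof (rule integral_dominated_convergence[where w = "\<lambda>w. 1 + 2 * y0 w / rival_mean"])
    show "integrable N (\<lambda>w. 1 + 2 * y0 w / rival_mean)"
      using y0_int by simp
    show "AE w in N. (\<lambda>K. real K * y0 w / (y0 w + (real K - 1) * rival_mean)) \<longlonglongrightarrow> y0 w / rival_mean"
      using rival_mean_pos by (intro AE_I2 tendsto_of_nat_mult_div_affine)
    show "AE w in N. norm (real K * y0 w / (y0 w + (real K - 1) * rival_mean)) \<le> 1 + 2 * y0 w / rival_mean"
      for K
    proof (rule AE_I2)
      fix w assume "w \<in> space N"
      then show "norm (real K * y0 w / (y0 w + (real K - 1) * rival_mean)) \<le> 1 + 2 * y0 w / rival_mean"
        unfolding real_norm_def using y0_pos rival_mean_pos by (intro abs_of_nat_mult_divide_affine_le) auto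
    qed
  qed measurable
  then show ?thesis
    by (simp add: own_mean_def)
qed

lemma integrable_exp_neg_rival:
  "0 \<le> l \<Longrightarrow> integrable (N \<Otimes>\<^sub>M D) (\<lambda>z. exp (- l * Y (fst z) (snd z)))"
  using Y_pos
  by (intro finite_measure.integrable_const_bound[where B = 1] prob_space.finite_measure[OF prob_pair] AE_I2)
    (auto simp: space_pair_measure less_imp_le)

lemma laplace_nonneg: "0 \<le> laplace l"
  unfolding laplace_def by simp

lemma nn_integral_exp_neg_rival:
  "0 \<le> l \<Longrightarrow> (\<integral>\<^sup>+z. ennreal (exp (- l * Y (fst z) (snd z))) \<partial>(N \<Otimes>\<^sub>M D)) = ennreal (laplace l)"
  unfolding laplace_def by (intro nn_integral_eq_integral integrable_exp_neg_rival) auto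

text \<open>If the rivals' total score \<open>S\<close> reaches \<open>a\<close>, the share is at most \<open>K y / a\<close>; otherwise it is at
  most \<open>K \<le> K exp (l (a - S))\<close>.  Integrated, the second term is a Chernoff bound for the lower tail
  of \<open>S\<close>.\<close>

lemma share_chernoff_bound:
  assumes K: "1 \<le> K" and z: "z \<in> space (samples K)" and a: "0 < a" and l: "0 \<le> l"
  shows "ennreal (share K z) \<le> ennreal (real K / a) * ennreal (y0 (fst z 0))
    + ennreal (real K * exp (l * a)) * (\<Prod>k\<in>{1..<K}. ennreal (exp (- l * Y (fst z k) (snd z k))))"
proof -
  have y: "0 < y0 (fst z 0)"
    using K y0_pos space_samples(1)[OF z] by simp
  have "exp (l * (a - rivals_score K z)) = exp (l * a) * (\<Prod>k\<in>{1..<K}. exp (- l * Y (fst z k) (snd z k)))"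
    by (simp add: rivals_score_def right_diff_distrib exp_diff exp_sum[symmetric] sum_distrib_left
        sum_negf divide_inverse exp_minus[symmetric])
  then have "share K z \<le> real K / a * y0 (fst z 0)
      + real K * exp (l * a) * (\<Prod>k\<in>{1..<K}. exp (- l * Y (fst z k) (snd z k)))"
    using mult_left_mono[OF divide_le_split_exp[OF y rivals_score_nonneg[OF z] a l], of "real K"]
    by (simp add: share_def algebra_simps)
  then have "ennreal (share K z) \<le> ennreal (real K / a * y0 (fst z 0)
      + real K * exp (l * a) * (\<Prod>k\<in>{1..<K}. exp (- l * Y (fst z k) (snd z k))))"
    by (rule ennreal_leI)
  also have "\<dots> = ennreal (real K / a) * ennreal (y0 (fst z 0))
    + ennreal (real K * exp (l * a)) * (\<Prod>k\<in>{1..<K}. ennreal (exp (- l * Y (fst z k) (snd z k))))"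
    using a y by (simp add: ennreal_mult[symmetric] prod_ennreal prod_nonneg ennreal_plus[symmetric] del: ennreal_plus)
  finally show ?thesis .
qed

lemma integral_share_upper:
  assumes K: "1 \<le> K" and a: "0 < a" and l: "0 \<le> l"
  shows "(\<integral>z. share K z \<partial>samples K) \<le> real K * own_mean / a + real K * exp (l * a) * laplace l ^ (K - 1)"
proof -
  have "(\<lambda>z. \<Prod>k\<in>{1..<K}. ennreal (exp (- l * Y (fst z k) (snd z k)))) \<in> borel_measurable (samples K)"
    by (intro borel_measurable_prod_ennreal rival_measurable) auto
  moreover have "(\<lambda>z. ennreal (y0 (fst z 0))) \<in> borel_measurable (samples K)"
    using own_measurable[OF K, of "\<lambda>w. ennreal (y0 w)"] by simp
  moreover have "(\<integral>\<^sup>+z. ennreal (y0 (fst z 0)) \<partial>samples K) = ennreal own_mean"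
    using nn_integral_own[OF K, of "\<lambda>w. ennreal (y0 w)"] by (simp add: nn_integral_own_score)
  moreover have "(\<integral>\<^sup>+z. (\<Prod>k\<in>{1..<K}. ennreal (exp (- l * Y (fst z k) (snd z k)))) \<partial>samples K)
      = ennreal (laplace l) ^ (K - 1)"
    using nn_integral_prod_rivals[OF K, of "\<lambda>w x. ennreal (exp (- l * Y w x))"]
      nn_integral_exp_neg_rival[OF l] by simp
  ultimately have "(\<integral>\<^sup>+z. ennreal (real K / a) * ennreal (y0 (fst z 0))
      + ennreal (real K * exp (l * a)) * (\<Prod>k\<in>{1..<K}. ennreal (exp (- l * Y (fst z k) (snd z k)))) \<partial>samples K)
    = ennreal (real K / a) * ennreal own_mean + ennreal (real K * exp (l * a)) * ennreal (laplace l) ^ (K - 1)"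
    by (simp add: nn_integral_add nn_integral_cmult)
  with share_chernoff_bound[OF K _ a l]
  have "(\<integral>\<^sup>+z. ennreal (share K z) \<partial>samples K)
      \<le> ennreal (real K / a) * ennreal own_mean + ennreal (real K * exp (l * a)) * ennreal (laplace l) ^ (K - 1)"
    by (metis (no_types, lifting) nn_integral_mono)
  also have "\<dots> = ennreal (real K * own_mean / a + real K * exp (l * a) * laplace l ^ (K - 1))"
    using a laplace_nonneg own_mean_nonneg
    by (simp add: ennreal_power ennreal_mult[symmetric] ennreal_plus[symmetric] del: ennreal_plus)
  finally show ?thesis
    using integral_share_eq[OF K] laplace_nonneg own_mean_nonneg a
    by (simp add: enn2real_leI)
qed

text \<open>With \<open>laplace l \<le> exp (- l s)\<close> for some \<open>s > m'\<close>, the choice \<open>a = (K - 1) m'\<close> in the previous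
  bound makes the second term decay exponentially in \<open>K\<close>.\<close>

lemma integral_share_le_chernoff:
  assumes K: "2 \<le> K" and m': "0 < m'" and l: "0 < l" and laplace_l: "laplace l \<le> exp (- l * s)"
  shows "(\<integral>z. share K z \<partial>samples K)
    \<le> real K * own_mean / ((real K - 1) * m') + real K * exp (- (real K - 1) * (l * (s - m')))"
proof -
  have "laplace l ^ (K - 1) \<le> exp (- l * s) ^ (K - 1)"
    by (intro power_mono laplace_l laplace_nonneg)
  also have "\<dots> = exp (- (real K - 1) * l * s)"
    using K by (simp add: exp_of_nat_mult[symmetric] of_nat_diff algebra_simps)
  finally have "exp (l * ((real K - 1) * m')) * laplace l ^ (K - 1)
      \<le> exp (l * ((real K - 1) * m')) * exp (- (real K - 1) * l * s)"
    by (intro mult_left_mono) auto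
  also have "\<dots> = exp (- (real K - 1) * (l * (s - m')))"
    unfolding exp_add[symmetric] by (simp add: algebra_simps)
  finally have "real K * (exp (l * ((real K - 1) * m')) * laplace l ^ (K - 1))
      \<le> real K * exp (- (real K - 1) * (l * (s - m')))"
    by (intro mult_left_mono) auto
  moreover have "(\<integral>z. share K z \<partial>samples K)
      \<le> real K * own_mean / ((real K - 1) * m') + real K * exp (l * ((real K - 1) * m')) * laplace l ^ (K - 1)"
    using K m' l by (intro integral_share_upper) auto
  ultimately show ?thesis
    by (simp add: mult.assoc)
qed

lemma tendsto_laplace_slope: "(\<lambda>n. real n * (1 - laplace (inverse (real n)))) \<longlonglongrightarrow> rival_mean"
proof -
  interpret ND: prob_space "N \<Otimes>\<^sub>M D"
    by (rule prob_pair)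
  have Y_pos': "0 < Y (fst z) (snd z)" if "z \<in> space (N \<Otimes>\<^sub>M D)" for z
    using that by (auto simp: space_pair_measure Y_pos)
  have "(\<lambda>n. \<integral>z. real n * (1 - exp (- (Y (fst z) (snd z) / real n))) \<partial>(N \<Otimes>\<^sub>M D)) \<longlonglongrightarrow> rival_mean"
    unfolding rival_mean_def
  proof (rule integral_dominated_convergence[where w = "\<lambda>z. Y (fst z) (snd z)"])
    show "AE z in N \<Otimes>\<^sub>M D. (\<lambda>n. real n * (1 - exp (- (Y (fst z) (snd z) / real n)))) \<longlonglongrightarrow> Y (fst z) (snd z)"
      using Y_pos' by (intro AE_I2 tendsto_of_nat_mult_one_minus_exp)
    show "AE z in N \<Otimes>\<^sub>M D. norm (real n * (1 - exp (- (Y (fst z) (snd z) / real n)))) \<le> Y (fst z) (snd z)" for n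
      unfolding real_norm_def using Y_pos'
      by (intro AE_I2 abs_of_nat_mult_one_minus_exp_le) (simp add: less_imp_le)
  qed (use Y_int in \<open>auto simp: split_beta'\<close>)
  moreover have "(\<integral>z. real n * (1 - exp (- (Y (fst z) (snd z) / real n))) \<partial>(N \<Otimes>\<^sub>M D))
      = real n * (1 - laplace (inverse (real n)))" for n
    using integrable_exp_neg_rival[of "inverse (real n)"]
    by (simp add: laplace_def ND.prob_space divide_inverse mult.commute)
  ultimately show ?thesis
    by (simp only:)
qed

lemma eventually_integral_share_greater:
  assumes "u < own_mean / rival_mean"
  shows "\<forall>\<^sub>F K in sequentially. u < (\<integral>z. share K z \<partial>samples K)"
proof -
  have "\<forall>\<^sub>F K in sequentially. u < (\<integral>w. real K * y0 w / (y0 w + (real K - 1) * rival_mean) \<partial>N)"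
    using tendsto_integral_share_lower assms by (rule order_tendstoD)
  then show ?thesis
    using eventually_ge_at_top[of 1]
    by eventually_elim (use integral_share_lower in \<open>fastforce intro: less_le_trans\<close>)
qed

lemma eventually_integral_share_less:
  assumes u: "own_mean / rival_mean < u"
  shows "\<forall>\<^sub>F K in sequentially. (\<integral>z. share K z \<partial>samples K) < u"
proof -
  define s where "s n = real n * (1 - laplace (inverse (real n)))" for n :: nat
  have s_lim: "(\<lambda>n. s n - inverse (real n)) \<longlonglongrightarrow> rival_mean"
    using tendsto_diff[OF tendsto_laplace_slope lim_inverse_n] by (simp add: s_def)
  have "\<forall>\<^sub>F n in sequentially. 0 < s n - inverse (real n)"
    using s_lim rival_mean_pos by (rule order_tendstoD)
  moreover have "\<forall>\<^sub>F n in sequentially. own_mean / (s n - inverse (real n)) < u"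
    using tendsto_divide[OF tendsto_const[of own_mean] s_lim] rival_mean_pos u by (auto dest: order_tendstoD)
  ultimately have "\<forall>\<^sub>F n in sequentially. 0 < s n - inverse (real n) \<and> own_mean / (s n - inverse (real n)) < u \<and> 1 \<le> n"
    using eventually_ge_at_top[of 1] by eventually_elim simp
  then obtain n where n: "0 < s n - inverse (real n)" "own_mean / (s n - inverse (real n)) < u" "1 \<le> n"
    using eventually_happens'[OF sequentially_bot] by blast
  define l where "l = inverse (real n)"
  have l: "0 < l"
    using n(3) by (simp add: l_def)
  have "l * s n = 1 - laplace l"
    using n(3) by (simp add: s_def l_def mult.assoc[symmetric])
  then have laplace_l: "laplace l \<le> exp (- l * s n)"
    using exp_ge_add_one_self[of "laplace l - 1"] by simp
  have bound: "(\<integral>z. share K z \<partial>samples K)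
      \<le> real K * own_mean / ((real K - 1) * (s n - l)) + real K * exp (- (real K - 1) * (l * l))"
    if "2 \<le> K" for K
    using integral_share_le_chernoff[OF that _ l laplace_l, where m' = "s n - l"] n(1) by (simp add: l_def)
  have "(\<lambda>K. real K * own_mean / ((real K - 1) * (s n - l)) + real K * exp (- (real K - 1) * (l * l)))
      \<longlonglongrightarrow> own_mean / (s n - l) + 0"
  proof -
    have "0 < s n - l" "0 < l * l"
      using n(1) l by (simp_all add: l_def)
    from tendsto_add[OF tendsto_of_nat_mult_div_affine[OF this(1), where c = 0 and q = own_mean] tendsto_of_nat_mult_exp_neg[OF this(2)]]
    show ?thesis
      by (simp only: add_0_left)
  qed
  then have "\<forall>\<^sub>F K in sequentially.
      real K * own_mean / ((real K - 1) * (s n - l)) + real K * exp (- (real K - 1) * (l * l)) < u"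
    using n(2) by (intro order_tendstoD) (auto simp: l_def)
  then show ?thesis
    using eventually_ge_at_top[of 2] by eventually_elim (use bound in fastforce)
qed

theorem tendsto_integral_share: "(\<lambda>K. \<integral>z. share K z \<partial>samples K) \<longlonglongrightarrow> own_mean / rival_mean"
  by (rule order_tendstoI) (auto intro: eventually_integral_share_greater eventually_integral_share_less)

end

section \<open>Gibbs' inequality\<close>

definition finite_entropy_dens :: "'a measure \<Rightarrow> ('a \<Rightarrow> real) set" where
  "finite_entropy_dens M = {p \<in> dens M. (\<integral>\<^sup>+x. ennreal (p x * \<bar>ln (p x)\<bar>) \<partial>M) < \<infinity>}"

lemma dens_measurable: "p \<in> dens M \<Longrightarrow> p \<in> borel_measurable M"
  and dens_nonneg: "p \<in> dens M \<Longrightarrow> x \<in> space M \<Longrightarrow> 0 \<le> p x"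
  and nn_integral_dens: "p \<in> dens M \<Longrightarrow> (\<integral>\<^sup>+x. ennreal (p x) \<partial>M) = 1"
  by (auto simp: dens_def)

lemma finite_entropy_dens_cong:
  assumes "\<And>x. x \<in> space M \<Longrightarrow> p x = q x"
  shows "p \<in> finite_entropy_dens M \<longleftrightarrow> q \<in> finite_entropy_dens M"
proof -
  have "p \<in> borel_measurable M \<longleftrightarrow> q \<in> borel_measurable M"
    using assms by (rule measurable_cong)
  moreover have "(\<integral>\<^sup>+x. ennreal (p x) \<partial>M) = (\<integral>\<^sup>+x. ennreal (q x) \<partial>M)"
    "(\<integral>\<^sup>+x. ennreal (p x * \<bar>ln (p x)\<bar>) \<partial>M) = (\<integral>\<^sup>+x. ennreal (q x * \<bar>ln (q x)\<bar>) \<partial>M)"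
    using assms by (auto intro: nn_integral_cong)
  ultimately show ?thesis
    unfolding finite_entropy_dens_def dens_def using assms by auto
qed

definition log_pos_part :: "('a \<Rightarrow> real) \<Rightarrow> ('a \<Rightarrow> real) \<Rightarrow> 'a \<Rightarrow> ennreal" where
  "log_pos_part q p x = (if p x \<le> 0 then 0 else ennreal (q x * max 0 (ln (p x))))"

definition log_neg_part :: "('a \<Rightarrow> real) \<Rightarrow> ('a \<Rightarrow> real) \<Rightarrow> 'a \<Rightarrow> ennreal" where
  "log_neg_part q p x = (if q x = 0 then 0 else if p x \<le> 0 then \<infinity> else ennreal (q x * max 0 (- ln (p x))))"

text \<open>The integrand \<open>q ln (q / p) + p - q\<close> of the generalised Kullback-Leibler divergence; its values
  where \<open>q = 0\<close> or \<open>p \<le> 0\<close> are chosen so that \<open>log_parts_balance\<close> below holds everywhere.\<close>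

definition kl_integrand :: "('a \<Rightarrow> real) \<Rightarrow> ('a \<Rightarrow> real) \<Rightarrow> 'a \<Rightarrow> ennreal" where
  "kl_integrand q p x = (if q x = 0 then ennreal (p x) else if p x \<le> 0 then \<infinity>
     else ennreal (q x * ln (q x) - q x * ln (p x) + p x - q x))"

lemma obj_eq_log_parts:
  "obj M q p = enn2ereal (\<integral>\<^sup>+x. log_pos_part q p x \<partial>M) - enn2ereal (\<integral>\<^sup>+x. log_neg_part q p x \<partial>M)"
  unfolding obj_def log_pos_part_def log_neg_part_def ..

lemma mult_max_ln_le:
  fixes p q :: real
  assumes "0 < q" "0 < p"
  shows "q * max 0 (ln p) \<le> q * max 0 (ln q) + p"
proof (cases "p \<le> q")
  case True
  then have "ln p \<le> ln q"
    using assms by simp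
  then have "max 0 (ln p) \<le> max 0 (ln q)"
    by (rule max.mono[OF order_refl])
  then have "q * max 0 (ln p) \<le> q * max 0 (ln q)"
    by (rule mult_left_mono) (use assms in simp)
  then show ?thesis
    using assms by linarith
next
  case False
  have "ln p - ln q \<le> p / q - 1"
    using ln_le_minus_one[of "p / q"] assms by (simp add: ln_div)
  then have "q * (ln p - ln q) \<le> p - q"
    using assms mult_left_mono[of "ln p - ln q" "p / q - 1" q] by (simp add: algebra_simps)
  moreover have "max 0 (ln p) \<le> max 0 (ln q) + (ln p - ln q)"
    using False assms by (auto simp: max_def)
  ultimately show ?thesis
    using assms mult_left_mono[of "max 0 (ln p)" "max 0 (ln q) + (ln p - ln q)" q]
    by (simp add: algebra_simps)
qed

lemma kl_pointwise_nonneg: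
  fixes p q :: real
  assumes "0 < q" "0 < p"
  shows "0 \<le> q * ln q - q * ln p + p - q"
    and "q * ln q - q * ln p + p - q = 0 \<Longrightarrow> p = q"
proof -
  have eq: "q * ln q - q * ln p + p - q = q * ((p / q - 1) - ln (p / q))"
    using assms by (simp add: ln_div field_simps)
  have "ln (p / q) \<le> p / q - 1"
    using assms by (intro ln_le_minus_one) simp
  then show "0 \<le> q * ln q - q * ln p + p - q"
    unfolding eq using assms by simp
  assume "q * ln q - q * ln p + p - q = 0"
  then have "ln (p / q) = p / q - 1"
    unfolding eq using assms by simp
  then have "p / q = 1"
    using assms by (intro ln_eq_minus_one) auto
  then show "p = q"
    using assms by simp
qed

lemma log_pos_part_le: "0 \<le> q x \<Longrightarrow> log_pos_part q p x \<le> log_pos_part q q x + ennreal (p x)"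
  using mult_max_ln_le[of "q x" "p x"]
  by (cases "q x = 0") (auto simp: log_pos_part_def ennreal_plus[symmetric] ennreal_leI simp del: ennreal_plus)

lemma log_parts_balance:
  assumes "0 \<le> q x"
  shows "log_pos_part q p x + log_neg_part q q x + ennreal (q x) + kl_integrand q p x
       = log_pos_part q q x + log_neg_part q p x + ennreal (p x)"
proof (cases "q x = 0 \<or> p x \<le> 0")
  case True
  then show ?thesis
    by (auto simp: log_pos_part_def log_neg_part_def kl_integrand_def)
next
  case False
  then have q: "0 < q x" and p: "0 < p x"
    using assms by auto
  have ln_split: "ln t = max 0 (ln t) - max 0 (- ln t)" for t :: real
    by (simp add: max_def)
  have "c * a + c * e + c + (c * lq - c * lp + b - c) = c * d + c * f + b"
    if "lp = a - f" "lq = d - e" for a b c d e f lp lq :: real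
    unfolding that by (simp add: algebra_simps)
  from this[OF ln_split ln_split]
  have "q x * max 0 (ln (p x)) + q x * max 0 (- ln (q x)) + q x
      + (q x * ln (q x) - q x * ln (p x) + p x - q x)
      = q x * max 0 (ln (q x)) + q x * max 0 (- ln (p x)) + p x" .
  then show ?thesis
    using q p kl_pointwise_nonneg(1)[OF q p]
    by (simp add: log_pos_part_def log_neg_part_def kl_integrand_def ennreal_plus[symmetric] del: ennreal_plus)
qed

lemma kl_integrand_eq_0_iff: "0 \<le> q x \<Longrightarrow> 0 \<le> p x \<Longrightarrow> kl_integrand q p x = 0 \<longleftrightarrow> p x = q x"
  using kl_pointwise_nonneg[of "q x" "p x"]
  by (cases "q x = 0"; cases "p x = 0") (auto simp: kl_integrand_def ennreal_eq_0_iff)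

lemma log_parts_measurable:
  assumes [measurable]: "q \<in> borel_measurable M" "p \<in> borel_measurable M"
  shows "log_pos_part q p \<in> borel_measurable M" "log_neg_part q p \<in> borel_measurable M"
    and "kl_integrand q p \<in> borel_measurable M"
proof -
  show "log_pos_part q p \<in> borel_measurable M"
    unfolding log_pos_part_def[abs_def] by measurable
  show "log_neg_part q p \<in> borel_measurable M"
    unfolding log_neg_part_def[abs_def] by measurable
  show "kl_integrand q p \<in> borel_measurable M"
    unfolding kl_integrand_def[abs_def] by measurable
qed

lemma nn_integral_log_parts_self_finite:
  assumes "q \<in> finite_entropy_dens M"
  shows "(\<integral>\<^sup>+x. log_pos_part q q x \<partial>M) < \<infinity>" and "(\<integral>\<^sup>+x. log_neg_part q q x \<partial>M) < \<infinity>"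
proof -
  have q: "q \<in> dens M" and ent: "(\<integral>\<^sup>+x. ennreal (q x * \<bar>ln (q x)\<bar>) \<partial>M) < \<infinity>"
    using assms by (auto simp: finite_entropy_dens_def)
  have "log_pos_part q q x \<le> ennreal (q x * \<bar>ln (q x)\<bar>)" "log_neg_part q q x \<le> ennreal (q x * \<bar>ln (q x)\<bar>)"
    if "x \<in> space M" for x
    using dens_nonneg[OF q that]
    by (auto simp: log_pos_part_def log_neg_part_def intro!: ennreal_leI mult_left_mono)
  then have "(\<integral>\<^sup>+x. log_pos_part q q x \<partial>M) \<le> (\<integral>\<^sup>+x. ennreal (q x * \<bar>ln (q x)\<bar>) \<partial>M)"
    "(\<integral>\<^sup>+x. log_neg_part q q x \<partial>M) \<le> (\<integral>\<^sup>+x. ennreal (q x * \<bar>ln (q x)\<bar>) \<partial>M)"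
    by (auto intro!: nn_integral_mono)
  with ent show "(\<integral>\<^sup>+x. log_pos_part q q x \<partial>M) < \<infinity>" "(\<integral>\<^sup>+x. log_neg_part q q x \<partial>M) < \<infinity>"
    by (auto dest: order.strict_trans1)
qed

lemma nn_integral_log_pos_part_finite:
  assumes q: "q \<in> finite_entropy_dens M" and p: "p \<in> dens M"
  shows "(\<integral>\<^sup>+x. log_pos_part q p x \<partial>M) < \<infinity>"
proof -
  have qd: "q \<in> dens M"
    using q by (simp add: finite_entropy_dens_def)
  have "(\<integral>\<^sup>+x. log_pos_part q p x \<partial>M) \<le> (\<integral>\<^sup>+x. log_pos_part q q x + ennreal (p x) \<partial>M)"
    using dens_nonneg[OF qd] by (intro nn_integral_mono log_pos_part_le)
  also have "\<dots> = (\<integral>\<^sup>+x. log_pos_part q q x \<partial>M) + 1"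
    using qd p log_parts_measurable(1)[OF dens_measurable[OF qd] dens_measurable[OF qd]]
    by (subst nn_integral_add) (auto simp: dens_measurable nn_integral_dens measurable_compose[OF _ measurable_ennreal])
  also have "\<dots> < \<infinity>"
    using nn_integral_log_parts_self_finite(1)[OF q] by simp
  finally show ?thesis .
qed

lemma nn_integral_log_parts_balance:
  assumes q: "q \<in> dens M" and p: "p \<in> dens M"
  shows "(\<integral>\<^sup>+x. log_pos_part q p x \<partial>M) + (\<integral>\<^sup>+x. log_neg_part q q x \<partial>M) + 1 + (\<integral>\<^sup>+x. kl_integrand q p x \<partial>M)
       = (\<integral>\<^sup>+x. log_pos_part q q x \<partial>M) + (\<integral>\<^sup>+x. log_neg_part q p x \<partial>M) + 1"
proof -
  have "q \<in> borel_measurable M" "p \<in> borel_measurable M"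
    using p q by (auto intro: dens_measurable)
  note measurable = log_parts_measurable[OF this(1,1)] log_parts_measurable[OF this(1,2)] this
  have "(\<integral>\<^sup>+x. log_pos_part q p x + log_neg_part q q x + ennreal (q x) + kl_integrand q p x \<partial>M)
      = (\<integral>\<^sup>+x. log_pos_part q q x + log_neg_part q p x + ennreal (p x) \<partial>M)"
    using dens_nonneg[OF q] by (intro nn_integral_cong log_parts_balance)
  then show ?thesis
    using p q measurable by (simp add: nn_integral_add nn_integral_dens add.assoc)
qed

lemma AE_eq_of_nn_integral_kl_eq_0:
  assumes q: "q \<in> dens M" and p: "p \<in> dens M" and kl: "(\<integral>\<^sup>+x. kl_integrand q p x \<partial>M) = 0"
  shows "AE x in M. p x = q x"
proof -
  have "AE x in M. kl_integrand q p x = 0"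
    using kl p q by (subst nn_integral_0_iff_AE[symmetric]) (auto intro: log_parts_measurable dens_measurable)
  then show ?thesis
    using dens_nonneg[OF q] dens_nonneg[OF p] by (auto elim!: AE_mp intro!: AE_I2 simp: kl_integrand_eq_0_iff)
qed

theorem unique_maximizer_obj_self:
  assumes q: "q \<in> finite_entropy_dens M"
  shows "unique_maximizer M (obj M q) q"
proof -
  have qd: "q \<in> dens M"
    using q by (simp add: finite_entropy_dens_def)
  obtain aq bq where aq: "(\<integral>\<^sup>+x. log_pos_part q q x \<partial>M) = ennreal aq" "0 \<le> aq"
    and bq: "(\<integral>\<^sup>+x. log_neg_part q q x \<partial>M) = ennreal bq" "0 \<le> bq"
    using nn_integral_log_parts_self_finite[OF q] by (auto simp: less_top_ennreal)
  have obj_q: "obj M q q = ereal (aq - bq)"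
    unfolding obj_eq_log_parts aq bq using aq bq by simp
  have "obj M q p \<le> obj M q q \<and> (obj M q p = obj M q q \<longrightarrow> (AE x in M. p x = q x))" if p: "p \<in> dens M" for p
  proof -
    obtain ap where ap: "(\<integral>\<^sup>+x. log_pos_part q p x \<partial>M) = ennreal ap" "0 \<le> ap"
      using nn_integral_log_pos_part_finite[OF q p] by (auto simp: less_top_ennreal)
    show ?thesis
    proof (cases "(\<integral>\<^sup>+x. log_neg_part q p x \<partial>M)" rule: ennreal_cases)
      case top
      then have "obj M q p = - \<infinity>"
        unfolding obj_eq_log_parts ap using ap by simp
      then show ?thesis
        using obj_q by simp
    next
      case (real bp)
      note balance = nn_integral_log_parts_balance[OF qd p, unfolded ap aq bq real(2)]
      then obtain dp where dp: "(\<integral>\<^sup>+x. kl_integrand q p x \<partial>M) = ennreal dp" "0 \<le> dp"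
        by (cases "(\<integral>\<^sup>+x. kl_integrand q p x \<partial>M)" rule: ennreal_cases) (auto simp: eq_commute[of top])
      with balance have "ap + bq + 1 + dp = aq + bp + 1"
        using ap aq bq real(1) by (simp add: ennreal_plus[symmetric] del: ennreal_plus)
      moreover have "obj M q p = ereal (ap - bp)"
        unfolding obj_eq_log_parts ap real(2) using ap real(1) by simp
      ultimately show ?thesis
        using AE_eq_of_nn_integral_kl_eq_0[OF qd p] dp obj_q by auto
    qed
  qed
  then show ?thesis
    unfolding unique_maximizer_def using qd by blast
qed

section \<open>The iteration\<close>

lemma prob_space_density_dens: "p \<in> dens M \<Longrightarrow> prob_space (density M p)"
  by (rule prob_spaceI) (auto simp: dens_def emeasure_density)

lemma mult_abs_ln_le:
  fixes Q Q_max :: real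
  assumes "0 < Q" "Q \<le> Q_max"
  shows "Q * \<bar>ln Q\<bar> \<le> 1 + Q_max\<^sup>2"
proof (cases "Q \<le> 1")
  case True
  have "1 - 1 / Q \<le> ln Q"
    using ln_le_minus_one[of "1 / Q"] assms by (simp add: ln_div)
  moreover have "ln Q \<le> 0"
    using True assms by simp
  ultimately have "Q * \<bar>ln Q\<bar> \<le> Q * (1 / Q - 1)"
    using assms by (intro mult_left_mono) auto
  also have "\<dots> = 1 - Q"
    using assms by (simp add: right_diff_distrib)
  also have "\<dots> \<le> 1 + Q_max\<^sup>2"
    using assms zero_le_power2[of Q_max] by linarith
  finally show ?thesis .
next
  case False
  then have "\<bar>ln Q\<bar> \<le> Q"
    using ln_le_minus_one[of Q] assms by simp
  then have "Q * \<bar>ln Q\<bar> \<le> Q_max * Q_max"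
    using assms by (intro mult_mono) auto
  then show ?thesis
    by (simp add: power2_eq_square)
qed

lemma mult_abs_ln_tilt_le:
  fixes p Q Q_max c :: real
  assumes p: "0 \<le> p" and Q: "0 < Q" "Q \<le> Q_max" and c: "0 < c"
  shows "p * Q / c * \<bar>ln (p * Q / c)\<bar> \<le> Q_max / c * (p * \<bar>ln p\<bar>) + (1 + Q_max\<^sup>2 + Q_max * \<bar>ln c\<bar>) / c * p"
proof (cases "p = 0")
  case False
  then have p: "0 < p"
    using p by simp
  have "\<bar>ln (p * Q / c)\<bar> \<le> \<bar>ln p\<bar> + \<bar>ln Q\<bar> + \<bar>ln c\<bar>"
    using p Q c by (simp add: ln_div ln_mult)
  then have "p * Q / c * \<bar>ln (p * Q / c)\<bar> \<le> p * Q / c * (\<bar>ln p\<bar> + \<bar>ln Q\<bar> + \<bar>ln c\<bar>)"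
    using p Q c by (intro mult_left_mono) auto
  also have "\<dots> = Q / c * (p * \<bar>ln p\<bar>) + p / c * (Q * \<bar>ln Q\<bar>) + Q * \<bar>ln c\<bar> / c * p"
    using c by (simp add: field_simps)
  also have "\<dots> \<le> Q_max / c * (p * \<bar>ln p\<bar>) + p / c * (1 + Q_max\<^sup>2) + Q_max * \<bar>ln c\<bar> / c * p"
    using p Q c mult_abs_ln_le[OF Q]
    by (intro add_mono mult_left_mono mult_right_mono divide_right_mono) auto
  also have "\<dots> = Q_max / c * (p * \<bar>ln p\<bar>) + (1 + Q_max\<^sup>2 + Q_max * \<bar>ln c\<bar>) / c * p"
    using c by (simp add: field_simps)
  finally show ?thesis .
qed simp

locale bounded_choice_model =
  fixes M :: "'a measure" and N :: "'w measure" and r :: "'a \<Rightarrow> real"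
    and eps :: "'w \<Rightarrow> 'a \<Rightarrow> real" and Q_max :: real
  assumes prob_N: "prob_space N"
    and r_meas[measurable]: "r \<in> borel_measurable M"
    and eps_meas[measurable]: "(\<lambda>(w, x). eps w x) \<in> borel_measurable (N \<Otimes>\<^sub>M M)"
    and Qf_le: "\<And>x. x \<in> space M \<Longrightarrow> Qf N r eps x \<le> ennreal Q_max"
    and Q_max_pos: "0 < Q_max"
begin

definition "mean_Q p = (\<integral>\<^sup>+x. ennreal (p x) * Qf N r eps x \<partial>M)"

lemma eps_swap_measurable[measurable]: "(\<lambda>(x, w). eps w x) \<in> borel_measurable (M \<Otimes>\<^sub>M N)"
  using eps_meas by (subst measurable_pair_swap_iff) simp

lemma Qf_measurable[measurable]: "(\<lambda>x. Qf N r eps x) \<in> borel_measurable M"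
proof -
  interpret N: sigma_finite_measure N
    using prob_N by (rule prob_space_imp_sigma_finite)
  show ?thesis
    unfolding Qf_def by measurable
qed

lemma Qf_eq_nn_integral:
  "x \<in> space M \<Longrightarrow> (\<integral>\<^sup>+w. ennreal (exp (r x + eps w x)) \<partial>N) = Qf N r eps x"
  unfolding Qf_def by (subst nn_integral_cmult[symmetric]) (auto simp: exp_add ennreal_mult)

lemma Qf_pos: "x \<in> space M \<Longrightarrow> 0 < Qf N r eps x"
  unfolding Qf_def using prob_space.emeasure_space_1[OF prob_N]
  by (auto simp: nn_integral_0_iff_AE zero_less_iff_neq_zero AE_iff_measurable[OF _ refl]
      prob_space.AE_False[OF prob_N])

lemma Qf_finite: "x \<in> space M \<Longrightarrow> Qf N r eps x < \<infinity>"
  using Qf_le[of x] by (simp add: le_less_trans ennreal_less_top)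

lemma mean_Q_le: "p \<in> dens M \<Longrightarrow> mean_Q p \<le> ennreal Q_max"
proof -
  assume p: "p \<in> dens M"
  have "mean_Q p \<le> (\<integral>\<^sup>+x. ennreal (p x) * ennreal Q_max \<partial>M)"
    unfolding mean_Q_def using Qf_le by (intro nn_integral_mono mult_left_mono) auto
  also have "\<dots> = ennreal Q_max"
    using p measurable_compose[OF dens_measurable[OF p] measurable_ennreal]
    by (simp add: nn_integral_multc nn_integral_dens)
  finally show ?thesis .
qed

lemma mean_Q_pos: "p \<in> dens M \<Longrightarrow> 0 < mean_Q p"
proof (rule ccontr)
  assume p: "p \<in> dens M" and "\<not> 0 < mean_Q p"
  then have "mean_Q p = 0"
    by (simp add: zero_less_iff_neq_zero)
  then have "AE x in M. ennreal (p x) * Qf N r eps x = 0"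
    unfolding mean_Q_def using dens_measurable[OF p] by (subst (asm) nn_integral_0_iff_AE) auto
  then have "AE x in M. ennreal (p x) = 0"
    by (rule AE_mp) (auto intro!: AE_I2 dest: Qf_pos)
  then have "(\<integral>\<^sup>+x. ennreal (p x) \<partial>M) = 0"
    using dens_measurable[OF p] by (subst nn_integral_0_iff_AE) auto
  then show False
    using nn_integral_dens[OF p] by simp
qed

lemma utility_measurable_density:
  "(\<lambda>(w, x). exp (r x + eps w x)) \<in> borel_measurable (N \<Otimes>\<^sub>M density M p)"
  by (subst measurable_cong_sets[OF sets_pair_measure_cong[OF refl sets_density] refl]) measurable

lemma nn_integral_utility_density:
  assumes p: "p \<in> dens M"
  shows "(\<integral>\<^sup>+z. ennreal (exp (r (snd z) + eps (fst z) (snd z))) \<partial>(N \<Otimes>\<^sub>M density M p)) = mean_Q p"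
proof -
  have [measurable]: "p \<in> borel_measurable M"
    using p by (rule dens_measurable)
  interpret pair_sigma_finite N "density M p"
    using prob_N prob_space_density_dens[OF p] by (intro pair_sigma_finite.intro prob_space_imp_sigma_finite)
  have "(\<integral>\<^sup>+z. ennreal (exp (r (snd z) + eps (fst z) (snd z))) \<partial>(N \<Otimes>\<^sub>M density M p))
      = (\<integral>\<^sup>+x. \<integral>\<^sup>+w. ennreal (exp (r x + eps w x)) \<partial>N \<partial>density M p)"
    using utility_measurable_density by (subst nn_integral_snd[symmetric]) (auto simp: split_beta')
  also have "\<dots> = mean_Q p"
    unfolding mean_Q_def by (subst nn_integral_density) (auto intro!: nn_integral_cong simp: Qf_eq_nn_integral)
  finally show ?thesis .
qed

lemma Hinf_eq:
  assumes p: "p \<in> dens M" and x: "x \<in> space M"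
  shows "Hinf M N r eps p x = enn2real (Qf N r eps x) / enn2real (mean_Q p)"
proof -
  have mean_Q_finite: "mean_Q p < \<infinity>"
    using mean_Q_le[OF p] by (simp add: le_less_trans ennreal_less_top)
  interpret K: choice_share N "density M p" "\<lambda>w x'. exp (r x' + eps w x')" "\<lambda>w. exp (r x + eps w x)"
  proof (rule choice_share.intro)
    show "integrable (N \<Otimes>\<^sub>M density M p) (\<lambda>z. exp (r (snd z) + eps (fst z) (snd z)))"
      using utility_measurable_density nn_integral_utility_density[OF p] mean_Q_finite
      by (intro integrableI_nonneg) (auto simp: split_beta')
    show "integrable N (\<lambda>w. exp (r x + eps w x))"
      using x Qf_eq_nn_integral[OF x] Qf_finite[OF x] by (intro integrableI_nonneg) auto
  qed (use prob_N prob_space_density_dens[OF p] utility_measurable_density x in auto)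
  have "HK M N r eps K p x = (\<integral>z. K.share K z \<partial>K.samples K)" for K
    unfolding HK_def K.samples_def K.share_def K.rivals_score_def by (simp add: case_prod_beta')
  then have "Hinf M N r eps p x = K.own_mean / K.rival_mean"
    unfolding Hinf_def using K.tendsto_integral_share by (simp add: limI)
  moreover have "K.own_mean = enn2real (Qf N r eps x)"
    unfolding K.own_mean_def using x by (simp add: integral_eq_nn_integral Qf_eq_nn_integral)
  moreover have "K.rival_mean = enn2real (mean_Q p)"
    unfolding K.rival_mean_def using utility_measurable_density nn_integral_utility_density[OF p]
    by (simp add: integral_eq_nn_integral split_beta')
  ultimately show ?thesis
    by simp
qed

definition "tilt p x = p x * enn2real (Qf N r eps x) / enn2real (mean_Q p)"

lemma mean_Q_real:
  assumes "p \<in> dens M"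
  shows "ennreal (enn2real (mean_Q p)) = mean_Q p" and "0 < enn2real (mean_Q p)"
  using mean_Q_pos[OF assms] mean_Q_le[OF assms]
  by (auto simp: le_less_trans ennreal_less_top enn2real_positive_iff)

lemma Qf_real:
  assumes "x \<in> space M"
  shows "ennreal (enn2real (Qf N r eps x)) = Qf N r eps x" and "0 < enn2real (Qf N r eps x)"
    and "enn2real (Qf N r eps x) \<le> Q_max"
  using Qf_pos[OF assms] Qf_finite[OF assms] Qf_le[OF assms] Q_max_pos
  by (auto simp: enn2real_positive_iff enn2real_leI)

lemma tilt_mem_dens:
  assumes p: "p \<in> dens M"
  shows "tilt p \<in> dens M"
proof -
  have [measurable]: "p \<in> borel_measurable M"
    using p by (rule dens_measurable)
  define c where "c = enn2real (mean_Q p)"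
  have c: "mean_Q p = ennreal c" "0 < c"
    using mean_Q_real[OF p] by (auto simp: c_def)
  have "(\<integral>\<^sup>+x. ennreal (tilt p x) \<partial>M) = (\<integral>\<^sup>+x. ennreal (p x) * Qf N r eps x * ennreal (1 / c) \<partial>M)"
    using dens_nonneg[OF p] Qf_real c(2)
    by (intro nn_integral_cong) (simp add: tilt_def c_def[symmetric] ennreal_mult less_imp_le divide_inverse)
  also have "\<dots> = 1"
    using c unfolding mean_Q_def by (simp add: nn_integral_multc ennreal_mult[symmetric])
  moreover have "tilt p \<in> borel_measurable M"
    unfolding tilt_def[abs_def] by measurable
  ultimately show ?thesis
    unfolding dens_def using dens_nonneg[OF p] Qf_real(2) c(2) by (auto simp: tilt_def c_def[symmetric])
qed

lemma tilt_mem_finite_entropy_dens: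
  assumes "p \<in> finite_entropy_dens M"
  shows "tilt p \<in> finite_entropy_dens M"
proof -
  have p: "p \<in> dens M" and ent: "(\<integral>\<^sup>+x. ennreal (p x * \<bar>ln (p x)\<bar>) \<partial>M) < \<infinity>"
    using assms by (auto simp: finite_entropy_dens_def)
  have [measurable]: "p \<in> borel_measurable M"
    using p by (rule dens_measurable)
  define c where "c = enn2real (mean_Q p)"
  have c: "0 < c"
    using mean_Q_real(2)[OF p] by (simp add: c_def)
  have "(\<integral>\<^sup>+x. ennreal (tilt p x * \<bar>ln (tilt p x)\<bar>) \<partial>M)
      \<le> (\<integral>\<^sup>+x. ennreal (Q_max / c) * ennreal (p x * \<bar>ln (p x)\<bar>)
            + ennreal ((1 + Q_max\<^sup>2 + Q_max * \<bar>ln c\<bar>) / c) * ennreal (p x) \<partial>M)"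
  proof (rule nn_integral_mono)
    fix x assume x: "x \<in> space M"
    have "tilt p x * \<bar>ln (tilt p x)\<bar> \<le> Q_max / c * (p x * \<bar>ln (p x)\<bar>) + (1 + Q_max\<^sup>2 + Q_max * \<bar>ln c\<bar>) / c * p x"
      unfolding tilt_def c_def[symmetric] using dens_nonneg[OF p x] Qf_real(2,3)[OF x] c by (rule mult_abs_ln_tilt_le)
    then show "ennreal (tilt p x * \<bar>ln (tilt p x)\<bar>) \<le> ennreal (Q_max / c) * ennreal (p x * \<bar>ln (p x)\<bar>)
        + ennreal ((1 + Q_max\<^sup>2 + Q_max * \<bar>ln c\<bar>) / c) * ennreal (p x)"
      using dens_nonneg[OF p x] c Q_max_pos
      by (simp add: ennreal_mult[symmetric] ennreal_plus[symmetric] ennreal_leI del: ennreal_plus)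
  qed
  also have "\<dots> < \<infinity>"
  proof -
    have "(\<lambda>x. ennreal (p x * \<bar>ln (p x)\<bar>)) \<in> borel_measurable M" "(\<lambda>x. ennreal (p x)) \<in> borel_measurable M"
      by measurable
    then show ?thesis
      using ent nn_integral_dens[OF p] by (simp add: nn_integral_add nn_integral_cmult ennreal_mult_less_top)
  qed
  finally show ?thesis
    unfolding finite_entropy_dens_def using tilt_mem_dens[OF p] by simp
qed

lemma mult_Hinf_mem_finite_entropy_dens:
  assumes "p \<in> finite_entropy_dens M"
  shows "(\<lambda>x. p x * Hinf M N r eps p x) \<in> finite_entropy_dens M"
proof -
  have "p \<in> dens M"
    using assms by (simp add: finite_entropy_dens_def)
  then have "p x * Hinf M N r eps p x = tilt p x" if "x \<in> space M" for x
    using Hinf_eq[OF _ that] by (simp add: tilt_def)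
  then show ?thesis
    using finite_entropy_dens_cong[of M "\<lambda>x. p x * Hinf M N r eps p x" "tilt p"]
      tilt_mem_finite_entropy_dens[OF assms] by simp
qed

end

theorem theorem2:
  fixes M :: "'a measure" and N :: "'w measure" and r :: "'a \<Rightarrow> real"
    and eps :: "'w \<Rightarrow> 'a \<Rightarrow> real" and p0 pref :: "'a \<Rightarrow> real"
  assumes sf: "sigma_finite_measure M"
    and r_meas: "r \<in> borel_measurable M"
    and N_prob: "prob_space N"
    and eps_meas: "(\<lambda>(w, x). eps w x) \<in> borel_measurable (N \<Otimes>\<^sub>M M)"
    and a_p0: "p0 \<in> dens M" "(\<integral>\<^sup>+x. ennreal (p0 x * \<bar>ln (p0 x)\<bar>) \<partial>M) < \<infinity>"
    and a_pref: "pref \<in> dens M" "(\<integral>\<^sup>+x. ennreal (pref x * \<bar>ln (pref x)\<bar>) \<partial>M) < \<infinity>"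
    and b: "\<forall>p\<in>dens M. (\<integral>\<^sup>+x. (\<integral>\<^sup>+w. ennreal (exp \<bar>r x + eps w x\<bar>) \<partial>N) \<partial>(density M p)) < \<infinity>"
    and c: "0 < esssup M (\<lambda>x. enn2ereal (Qf N r eps x))"
           "esssup M (\<lambda>x. enn2ereal (Qf N r eps x)) < \<infinity>"
           "\<forall>x\<in>space M. enn2ereal (Qf N r eps x) \<le> esssup M (\<lambda>x. enn2ereal (Qf N r eps x))"
  shows "\<forall>t. unique_maximizer M
               (\<lambda>p. obj M (\<lambda>x. iter M N r eps p0 t x * Hinf M N r eps (iter M N r eps p0 t) x) p)
               (\<lambda>x. iter M N r eps p0 t x * Hinf M N r eps (iter M N r eps p0 t) x)"
proof -
  define Q_max where "Q_max = real_of_ereal (esssup M (\<lambda>x. enn2ereal (Qf N r eps x)))"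
  have Q_max: "esssup M (\<lambda>x. enn2ereal (Qf N r eps x)) = ereal Q_max" "0 < Q_max"
    using c(1,2) unfolding Q_max_def
    by (cases "esssup M (\<lambda>x. enn2ereal (Qf N r eps x))"; simp)+
  have "Qf N r eps x \<le> ennreal Q_max" if "x \<in> space M" for x
    using c(3) that Q_max by (simp add: less_eq_ennreal.rep_eq enn2ereal_ennreal)
  then interpret bounded_choice_model M N r eps Q_max
    using N_prob r_meas eps_meas Q_max(2) by (intro bounded_choice_model.intro)
  have iterate: "iter M N r eps p0 t \<in> finite_entropy_dens M" for t
  proof (induction t)
    case 0
    then show ?case
      using a_p0 by (simp add: finite_entropy_dens_def)
  next
    case (Suc t)
    then show ?case
      by (simp add: mult_Hinf_mem_finite_entropy_dens)
  qed
  show ?thesis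
    using unique_maximizer_obj_self[OF iterate[of "Suc _"]] by simp
qed

end
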